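(* Let $H\in(1/2,1)$, $T>0$, and let $\{B^H_t\}_{t\in[0,T]}$ be a fractional Brownian motion with Hurst index $H$, i.e. a continuous centered Gaussian process with $E(B^H_tB^H_s)=\frac12\left(t^{2H}+s^{2H}-|t-s|^{2H}\right)$, adapted to the filtration $\{\mathcal F_t\}_{t\in[0,T]}$ of a stochastic basis satisfying the usual conditions. Then for every sequence $\{\theta_n\}$ of normally condensing partitions of $[0,T]$, \[\sup_{t\in[0,T]}\big|B^H_t-A^{\theta_n}_t\big|\to 0\quad\text{in probability as } n\to\infty,\] where $A^{\theta_n}$ is the predictable compensator of the discretization of $B^H$ on $\theta_n$. That is, $B^H$ coincides with its local predictor along any sequence of normally condensing partitions, in the sense of uniform convergence in probability.
   Context: A stochastic basis $(\Omega,\mathcal F,\{\mathcal F_t\}_{t\in[0,T]},P)$ satisfies the usual conditions: the filtration is right-continuous and $\mathcal F_0$ contains all $P$-null sets of $\mathcal F_T$. For a partition $\theta$: $0=t_0^\theta<t_1^\theta<\dots<t^\theta_{k^\theta}=T$ of $[0,T]$ and an adapted process $X$ with integrable values and càdlàg paths, the predictable compensator of the discretization of $X$ on $\theta$ is the process $A^\theta_t=0$ for $0\le t<t_1^\theta$, $A^\theta_t=\sum_{j=1}^k E\big(X_{t_j^\theta}-X_{t_{j-1}^\theta}\,\big|\,\mathcal F_{t^\theta_{j-1}}\big)$ for $t_k^\theta\le t<t_{k+1}^\theta$ ($k=1,\dots,k^\theta-1$), and $A^\theta_T=\sum_{j=1}^{k^\theta}E\big(X_{t_j^\theta}-X_{t_{j-1}^\theta}\,\big|\,\mathcal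 F_{t^\theta_{j-1}}\big)$. A sequence $\{\theta_n\}$ of partitions of $[0,T]$ is normally condensing if $\theta_n\subset\theta_{n+1}$ and the mesh $|\theta_n|=\max_k(t_k^{\theta_n}-t_{k-1}^{\theta_n})\to0$. An adapted process $X$ with càdlàg paths admits a local predictor $C$ (a process with càdlàg paths) along $\{\theta_n\}$ in the sense of a convergence $\to_\tau$ if $A^{\theta_n}\to_\tau C$. *)

theory Defs
  imports "HOL-Probability.Probability"
begin

definition is_partition :: "real \<Rightarrow> real set \<Rightarrow> bool" where
  "is_partition T \<theta> \<longleftrightarrow> finite \<theta> \<and> \<theta> \<subseteq> {0..T} \<and> 0 \<in> \<theta> \<and> T \<in> \<theta>"

definition next_pt :: "real set \<Rightarrow> real \<Rightarrow> real" where
  "next_pt \<theta> a = Min {b \<in> \<theta>. a < b}"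

definition mesh :: "real set \<Rightarrow> real" where
  "mesh \<theta> = Max ((\<lambda>a. next_pt \<theta> a - a) ` {a \<in> \<theta>. a < Max \<theta>})"

definition normally_condensing :: "real \<Rightarrow> (nat \<Rightarrow> real set) \<Rightarrow> bool" where
  "normally_condensing T \<theta> \<longleftrightarrow> (\<forall>n. is_partition T (\<theta> n) \<and> \<theta> n \<subseteq> \<theta> (Suc n))
      \<and> (\<lambda>n. mesh (\<theta> n)) \<longlonglongrightarrow> 0"

definition compensator ::
  "'a measure \<Rightarrow> (real \<Rightarrow> 'a measure) \<Rightarrow> (real \<Rightarrow> 'a \<Rightarrow> real) \<Rightarrow> real set \<Rightarrow> real \<Rightarrow> 'a \<Rightarrow> real" where
  "compensator M F X \<theta> t \<omega> =
     (\<Sum>a \<in> {a \<in> \<theta>. a < Max \<theta> \<and> next_pt \<theta> a \<le> t}.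
        real_cond_exp M (F a) (\<lambda>\<omega>. X (next_pt \<theta> a) \<omega> - X a \<omega>) \<omega>)"

definition usual_filtration :: "'a measure \<Rightarrow> real \<Rightarrow> (real \<Rightarrow> 'a measure) \<Rightarrow> bool" where
  "usual_filtration M T F \<longleftrightarrow>
     (\<forall>t\<in>{0..T}. subalgebra M (F t)) \<and>
     (\<forall>s t. 0 \<le> s \<longrightarrow> s \<le> t \<longrightarrow> t \<le> T \<longrightarrow> sets (F s) \<subseteq> sets (F t)) \<and>
     (\<forall>t\<in>{0..<T}. sets (F t) = (\<Inter>s\<in>{t<..T}. sets (F s))) \<and>
     (\<forall>A\<in>sets (F T). emeasure M A = 0 \<longrightarrow> A \<in> sets (F 0))"

definition gaussian_rv :: "'a measure \<Rightarrow> ('a \<Rightarrow> real) \<Rightarrow> bool" where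
  "gaussian_rv M X \<longleftrightarrow> X \<in> borel_measurable M \<and>
     ((\<exists>c. AE \<omega> in M. X \<omega> = c) \<or>
      (\<exists>\<mu> \<sigma>. \<sigma> > 0 \<and> distributed M lborel X (normal_density \<mu> \<sigma>)))"

definition is_fBm :: "'a measure \<Rightarrow> real \<Rightarrow> real \<Rightarrow> (real \<Rightarrow> 'a \<Rightarrow> real) \<Rightarrow> bool" where
  "is_fBm M H T B \<longleftrightarrow>
     (\<forall>\<omega>\<in>space M. continuous_on {0..T} (\<lambda>t. B t \<omega>)) \<and>
     (\<forall>I c. finite I \<longrightarrow> I \<subseteq> {0..T} \<longrightarrow> gaussian_rv M (\<lambda>\<omega>. \<Sum>t\<in>I. c t * B t \<omega>)) \<and>
     (\<forall>t\<in>{0..T}. prob_space.expectation M (B t) = 0) \<and>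
     (\<forall>t\<in>{0..T}. \<forall>s\<in>{0..T}. prob_space.expectation M (\<lambda>\<omega>. B t \<omega> * B s \<omega>) =
        (t powr (2*H) + s powr (2*H) - \<bar>t - s\<bar> powr (2*H)) / 2)"

end

theory Submission
  imports Defs
begin

text \<open>
  Let \<open>t_0 < ... < t_m\<close> be the partition points, \<open>X_j = B(t_{j+1}) - B(t_j)\<close> and
  \<open>D_j = X_j - E(X_j | F(t_j))\<close>. Since \<open>B(0) = 0\<close> a.s., at a partition point \<open>B(t_k) - A(t_k)\<close>
  is the partial sum \<open>D_0 + ... + D_{k-1}\<close>, and each \<open>D_j\<close> is orthogonal in \<open>L\<^sup>2\<close> to everything
  \<open>F(t_j)\<close>-measurable. Kolmogorov's maximal inequality therefore bounds the probability that
  some partial sum exceeds \<open>\<epsilon>\<close> by \<open>\<epsilon>\<^sup>-\<^sup>2 \<Sum> E D_j\<^sup>2 \<le> \<epsilon>\<^sup>-\<^sup>2 \<Sum> E X_j\<^sup>2 = \<epsilon>\<^sup>-\<^sup>2 \<Sum> (t_{j+1} - t_j)\<^sup>2\<^sup>H\<close>,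
  which is at most \<open>\<epsilon>\<^sup>-\<^sup>2 T |\<theta>|\<^sup>2\<^sup>H\<^sup>-\<^sup>1 \<rightarrow> 0\<close> because \<open>H > 1/2\<close>. Between partition points \<open>A\<close> is
  constant, and by continuity of the paths the oscillation of \<open>B\<close> over intervals of length
  \<open>|\<theta>|\<close> is uniformly small outside an event of small probability.
\<close>

lemma square_integrable_mult:
  fixes f g :: "'a \<Rightarrow> real"
  assumes [measurable]: "f \<in> borel_measurable M" "g \<in> borel_measurable M"
    and "integrable M (\<lambda>x. (f x)^2)" "integrable M (\<lambda>x. (g x)^2)"
  shows "integrable M (\<lambda>x. f x * g x)"
proof (rule Bochner_Integration.integrable_bound)
  show "integrable M (\<lambda>x. (f x)^2 + (g x)^2)" using assms by auto
  show "AE x in M. norm (f x * g x) \<le> norm ((f x)^2 + (g x)^2)"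
  proof (rule AE_I2)
    fix x
    have "2 * \<bar>f x * g x\<bar> \<le> (f x)^2 + (g x)^2"
      using sum_squares_bound[of "\<bar>f x\<bar>" "\<bar>g x\<bar>"] by (simp add: abs_mult power2_abs)
    then show "norm (f x * g x) \<le> norm ((f x)^2 + (g x)^2)" by simp
  qed
qed measurable

lemma square_integrable_add:
  fixes f g :: "'a \<Rightarrow> real"
  assumes "f \<in> borel_measurable M" "g \<in> borel_measurable M"
    and "integrable M (\<lambda>x. (f x)^2)" "integrable M (\<lambda>x. (g x)^2)"
  shows "integrable M (\<lambda>x. (f x + g x)^2)"
proof -
  have "integrable M (\<lambda>x. (f x)^2 + 2 * (f x * g x) + (g x)^2)"
    using assms square_integrable_mult[OF assms] by auto
  then show ?thesis by (simp add: power2_sum algebra_simps)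
qed

lemma square_integrable_diff:
  fixes f g :: "'a \<Rightarrow> real"
  assumes "f \<in> borel_measurable M" "g \<in> borel_measurable M"
    and "integrable M (\<lambda>x. (f x)^2)" "integrable M (\<lambda>x. (g x)^2)"
  shows "integrable M (\<lambda>x. (f x - g x)^2)"
  using square_integrable_add[of f M "\<lambda>x. - g x"] assms by simp

lemma square_integrable_sum:
  fixes f :: "'i \<Rightarrow> 'a \<Rightarrow> real"
  assumes "finite I" "\<And>i. i \<in> I \<Longrightarrow> f i \<in> borel_measurable M"
    and "\<And>i. i \<in> I \<Longrightarrow> integrable M (\<lambda>x. (f i x)^2)"
  shows "integrable M (\<lambda>x. (\<Sum>i\<in>I. f i x)^2)"
  using assms
proof (induction I rule: finite_induct)
  case (insert a I)
  have "(\<lambda>x. \<Sum>i\<in>I. f i x) \<in> borel_measurable M"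
    using insert by (intro borel_measurable_sum) auto
  then show ?case using square_integrable_add[of "f a" M] insert by auto
qed simp

lemma square_integrable_mult_bounded:
  fixes f w :: "'a \<Rightarrow> real"
  assumes [measurable]: "f \<in> borel_measurable M" "w \<in> borel_measurable M"
    and "integrable M (\<lambda>x. (f x)^2)" and "\<And>x. 0 \<le> w x" "\<And>x. w x \<le> 1"
  shows "integrable M (\<lambda>x. (f x)^2 * w x)"
proof (rule Bochner_Integration.integrable_bound)
  show "AE x in M. norm ((f x)^2 * w x) \<le> norm ((f x)^2)"
    using assms(4,5) by (auto intro!: AE_I2 mult_left_le simp: abs_mult)
qed (use assms in auto)

lemma measurable_nested_subalgebra:
  assumes "subalgebra M A" "subalgebra M B" "sets A \<subseteq> sets B" "f \<in> borel_measurable A"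
  shows "f \<in> borel_measurable B"
proof (rule measurable_from_subalg[OF _ assms(4)])
  show "subalgebra B A" using assms(1-3) unfolding subalgebra_def by auto
qed

context finite_measure_subalgebra
begin

lemma square_integrable_real_cond_exp:
  assumes [measurable]: "X \<in> borel_measurable M" and X2: "integrable M (\<lambda>x. (X x)^2)"
  shows "integrable M (\<lambda>x. (real_cond_exp M F X x)^2)"
  using integrable_convex_cond_exp[where I=UNIV and q=power2, OF square_integrable_imp_integrable]
    assms convex_power2 by auto

lemma integral_mult_real_cond_exp_residual:
  assumes [measurable]: "X \<in> borel_measurable M" "Y \<in> borel_measurable F"
    and "integrable M (\<lambda>x. (X x)^2)" "integrable M (\<lambda>x. (Y x)^2)"
  shows "(\<integral>x. Y x * (X x - real_cond_exp M F X x) \<partial>M) = 0"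
proof -
  have [measurable]: "Y \<in> borel_measurable M" using measurable_from_subalg[OF subalg assms(2)] .
  have YX: "integrable M (\<lambda>x. Y x * X x)" by (intro square_integrable_mult assms(3,4)) measurable
  have "integrable M (\<lambda>x. Y x * real_cond_exp M F X x)"
    "(\<integral>x. Y x * real_cond_exp M F X x \<partial>M) = (\<integral>x. Y x * X x \<partial>M)"
    using real_cond_exp_intg[OF YX] by auto
  then show ?thesis using YX by (simp add: right_diff_distrib)
qed

lemma integral_square_real_cond_exp_residual:
  assumes [measurable]: "X \<in> borel_measurable M" and X2: "integrable M (\<lambda>x. (X x)^2)"
  shows "integrable M (\<lambda>x. (X x - real_cond_exp M F X x)^2)"
    and "(\<integral>x. (X x - real_cond_exp M F X x)^2 \<partial>M)
           = (\<integral>x. (X x)^2 \<partial>M) - (\<integral>x. (real_cond_exp M F X x)^2 \<partial>M)"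
proof -
  let ?C = "real_cond_exp M F X"
  have C2: "integrable M (\<lambda>x. (?C x)^2)" using square_integrable_real_cond_exp assms by simp
  have XC: "integrable M (\<lambda>x. X x * ?C x)" by (intro square_integrable_mult X2 C2) measurable
  show "integrable M (\<lambda>x. (X x - ?C x)^2)" by (intro square_integrable_diff X2 C2) measurable
  have "(\<integral>x. ?C x * (X x - ?C x) \<partial>M) = 0"
    using integral_mult_real_cond_exp_residual C2 X2 by simp
  then have "(\<integral>x. X x * ?C x \<partial>M) = (\<integral>x. (?C x)^2 \<partial>M)"
    using XC C2 by (simp add: right_diff_distrib power2_eq_square mult.commute)
  moreover have "(X x - ?C x)^2 = (X x)^2 - 2 * (X x * ?C x) + (?C x)^2" for x
    by (simp add: power2_diff)
  ultimately show "(\<integral>x. (X x - ?C x)^2 \<partial>M) = (\<integral>x. (X x)^2 \<partial>M) - (\<integral>x. (?C x)^2 \<partial>M)"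
    using X2 XC C2 by simp
qed

lemma integral_square_real_cond_exp_residual_le:
  assumes "X \<in> borel_measurable M" "integrable M (\<lambda>x. (X x)^2)"
  shows "(\<integral>x. (X x - real_cond_exp M F X x)^2 \<partial>M) \<le> (\<integral>x. (X x)^2 \<partial>M)"
  using integral_square_real_cond_exp_residual(2)[OF assms] by simp

end

section \<open>Kolmogorov's maximal inequality\<close>

definition first_exceeding :: "real \<Rightarrow> (nat \<Rightarrow> real) \<Rightarrow> nat \<Rightarrow> bool" where
  "first_exceeding \<epsilon> s k \<longleftrightarrow> \<epsilon> < \<bar>s k\<bar> \<and> (\<forall>i<k. \<bar>s i\<bar> \<le> \<epsilon>)"

lemma first_exceeding_unique:
  assumes "first_exceeding \<epsilon> s k" "first_exceeding \<epsilon> s l"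
  shows "k = l"
  using assms by (metis first_exceeding_def linorder_neqE_nat not_le)

lemma first_exceeding_exists:
  assumes "\<epsilon> < \<bar>s k\<bar>"
  obtains l where "l \<le> k" "first_exceeding \<epsilon> s l"
proof
  let ?l = "LEAST l. \<epsilon> < \<bar>s l\<bar>"
  show "?l \<le> k" using assms by (rule Least_le)
  show "first_exceeding \<epsilon> s ?l"
    unfolding first_exceeding_def using LeastI[of _ k] not_less_Least assms by fastforce
qed

lemma sum_of_bool_first_exceeding_le_1:
  assumes "finite K"
  shows "(\<Sum>k\<in>K. of_bool (first_exceeding \<epsilon> s k) :: real) \<le> 1"
proof -
  have "(\<Sum>k\<in>K. of_bool (first_exceeding \<epsilon> s k) :: real) = card {k\<in>K. first_exceeding \<epsilon> s k}"
    using sum.inter_filter[OF assms, of "\<lambda>_. 1::real" "first_exceeding \<epsilon> s"] by (simp add: of_bool_def)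
  also have "card {k\<in>K. first_exceeding \<epsilon> s k} \<le> 1"
    using first_exceeding_unique assms by (auto simp: card_le_Suc0_iff_eq)
  finally show ?thesis by simp
qed

lemma square_le_sum_first_exceeding:
  assumes "0 \<le> \<epsilon>" "k \<le> m" "\<epsilon> < \<bar>s k\<bar>"
  shows "\<epsilon>^2 \<le> (\<Sum>i\<le>m. (s i)^2 * of_bool (first_exceeding \<epsilon> s i))"
proof -
  obtain l where l: "l \<le> k" "first_exceeding \<epsilon> s l"
    using first_exceeding_exists[of \<epsilon> s k] assms(3) by blast
  have "\<epsilon>^2 \<le> \<bar>s l\<bar>^2"
    using l(2) assms(1) unfolding first_exceeding_def by (intro power_mono) auto
  also have "\<dots> = (s l)^2 * of_bool (first_exceeding \<epsilon> s l)" using l(2) by simp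
  also have "\<dots> \<le> (\<Sum>i\<le>m. (s i)^2 * of_bool (first_exceeding \<epsilon> s i))"
    by (rule member_le_sum) (use l assms(2) in auto)
  finally show ?thesis .
qed

locale orthogonal_increments = finite_measure M for M :: "'a measure" +
  fixes G :: "nat \<Rightarrow> 'a measure" and D :: "nat \<Rightarrow> 'a \<Rightarrow> real" and m :: nat
  assumes subalgebra_G: "\<And>j. j < m \<Longrightarrow> subalgebra M (G j)"
    and measurable_D: "\<And>j. j < m \<Longrightarrow> D j \<in> borel_measurable M"
    and square_integrable_D: "\<And>j. j < m \<Longrightarrow> integrable M (\<lambda>x. (D j x)^2)"
    and adapted_D: "\<And>i j. i < j \<Longrightarrow> j < m \<Longrightarrow> D i \<in> borel_measurable (G j)"
    and orthogonal_D: "\<And>j Y. j < m \<Longrightarrow> Y \<in> borel_measurable (G j) \<Longrightarrow>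
           integrable M (\<lambda>x. (Y x)^2) \<Longrightarrow> (\<integral>x. Y x * D j x \<partial>M) = 0"
begin

definition partial_sum :: "nat \<Rightarrow> 'a \<Rightarrow> real" where
  "partial_sum k x = (\<Sum>j<k. D j x)"

lemma measurable_partial_sum: "k \<le> m \<Longrightarrow> partial_sum k \<in> borel_measurable M"
  unfolding partial_sum_def using measurable_D by (intro borel_measurable_sum) auto

lemma adapted_partial_sum: "k \<le> j \<Longrightarrow> j < m \<Longrightarrow> partial_sum k \<in> borel_measurable (G j)"
  unfolding partial_sum_def using adapted_D by (intro borel_measurable_sum) auto

lemma square_integrable_partial_sum: "k \<le> m \<Longrightarrow> integrable M (\<lambda>x. (partial_sum k x)^2)"
  unfolding partial_sum_def using measurable_D square_integrable_D
  by (intro square_integrable_sum) auto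

text \<open>The weight \<open>w\<close> will be the indicator of the event that the partial sums first exceed
  the level at a time \<open>\<le> j\<close>; orthogonality kills the cross term.\<close>
lemma integral_partial_sum_square_weighted_Suc:
  assumes j: "j < m" and wG: "w \<in> borel_measurable (G j)" and w: "\<And>x. 0 \<le> w x" "\<And>x. w x \<le> 1"
  shows "(\<integral>x. (partial_sum (Suc j) x)^2 * w x \<partial>M)
      = (\<integral>x. (partial_sum j x)^2 * w x \<partial>M) + (\<integral>x. (D j x)^2 * w x \<partial>M)"
proof -
  let ?S = "partial_sum j"
  have [measurable]: "w \<in> borel_measurable M" "D j \<in> borel_measurable M" "?S \<in> borel_measurable M"
    using measurable_from_subalg[OF subalgebra_G[OF j] wG] measurable_D measurable_partial_sum j
    by auto
  have S2: "integrable M (\<lambda>x. (?S x)^2 * w x)" "integrable M (\<lambda>x. (D j x)^2 * w x)"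
    using j w by (auto intro!: square_integrable_mult_bounded square_integrable_partial_sum
        square_integrable_D)
  have Sw2: "integrable M (\<lambda>x. (?S x * w x)^2)"
    using square_integrable_mult_bounded[of ?S M "\<lambda>x. (w x)^2"] square_integrable_partial_sum j w
    by (simp add: power_mult_distrib power_le_one)
  have SwG: "(\<lambda>x. ?S x * w x) \<in> borel_measurable (G j)"
    using adapted_partial_sum[of j j] j wG by measurable
  have cross: "integrable M (\<lambda>x. ?S x * w x * D j x)"
    by (intro square_integrable_mult Sw2 square_integrable_D j) measurable
  have "(partial_sum (Suc j) x)^2 * w x = (?S x)^2 * w x + 2 * (?S x * w x * D j x) + (D j x)^2 * w x"
    for x by (simp add: partial_sum_def power2_sum algebra_simps)
  then show ?thesis
    using S2 cross orthogonal_D[OF j SwG Sw2] by simp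
qed

lemma integral_partial_sum_square_weighted_mono:
  assumes "k \<le> j" "j \<le> m"
    and wG: "\<And>i. k \<le> i \<Longrightarrow> i < m \<Longrightarrow> w \<in> borel_measurable (G i)"
    and w: "\<And>x. 0 \<le> w x" "\<And>x. w x \<le> 1"
  shows "(\<integral>x. (partial_sum k x)^2 * w x \<partial>M) \<le> (\<integral>x. (partial_sum j x)^2 * w x \<partial>M)"
  using assms(1,2)
proof (induction j)
  case (Suc j)
  show ?case
  proof (cases "k = Suc j")
    case False
    then have "k \<le> j" "j < m" using Suc by auto
    moreover have "0 \<le> (\<integral>x. (D j x)^2 * w x \<partial>M)"
      using w by (intro integral_nonneg_AE) auto
    ultimately show ?thesis
      using Suc.IH integral_partial_sum_square_weighted_Suc[OF \<open>j < m\<close> wG w] by force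
  qed simp
qed simp

lemma integral_partial_sum_square:
  "k \<le> m \<Longrightarrow> (\<integral>x. (partial_sum k x)^2 \<partial>M) = (\<Sum>j<k. \<integral>x. (D j x)^2 \<partial>M)"
proof (induction k)
  case (Suc k)
  then show ?case
    using integral_partial_sum_square_weighted_Suc[of k "\<lambda>_. 1"] by simp
qed (simp add: partial_sum_def)

lemma sets_exceeding_partial_sums: "{x\<in>space M. \<exists>k\<le>m. \<epsilon> < \<bar>\<Sum>j<k. D j x\<bar>} \<in> sets M"
proof -
  have [measurable]: "partial_sum i \<in> borel_measurable M" if "i \<le> m" for i
    using measurable_partial_sum that by auto
  show ?thesis unfolding partial_sum_def[symmetric] by measurable
qed

lemma sets_first_exceeding:
  assumes "k \<le> j" "j < m"
  shows "{x\<in>space M. first_exceeding \<epsilon> (\<lambda>i. partial_sum i x) k} \<in> sets (G j)"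
proof -
  have [measurable]: "partial_sum i \<in> borel_measurable (G j)" if "i \<le> k" for i
    using adapted_partial_sum that assms by auto
  have "{x\<in>space (G j). first_exceeding \<epsilon> (\<lambda>i. partial_sum i x) k} \<in> sets (G j)"
    unfolding first_exceeding_def by measurable
  then show ?thesis
    using subalgebra_G[OF \<open>j < m\<close>] unfolding subalgebra_def by simp
qed

theorem kolmogorov_maximal_inequality:
  assumes "0 < \<epsilon>"
  shows "measure M {x\<in>space M. \<exists>k\<le>m. \<epsilon> < \<bar>\<Sum>j<k. D j x\<bar>}
           \<le> (\<Sum>j<m. \<integral>x. (D j x)^2 \<partial>M) / \<epsilon>^2"
proof -
  define A where "A k = {x\<in>space M. first_exceeding \<epsilon> (\<lambda>i. partial_sum i x) k}" for k
  define E where "E = {x\<in>space M. \<exists>k\<le>m. \<epsilon> < \<bar>\<Sum>j<k. D j x\<bar>}"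
  have A_G: "A k \<in> sets (G j)" if "k \<le> j" "j < m" for k j
    unfolding A_def using sets_first_exceeding that .
  have A_M: "A k \<in> sets M" if "k \<le> m" for k
  proof -
    have [measurable]: "partial_sum i \<in> borel_measurable M" if "i \<le> k" for i
      using measurable_partial_sum that \<open>k \<le> m\<close> by auto
    show ?thesis unfolding A_def first_exceeding_def by measurable
  qed
  have E_M: "E \<in> sets M"
    unfolding E_def by (rule sets_exceeding_partial_sums)
  have ind: "indicator (A k) x = (of_bool (first_exceeding \<epsilon> (\<lambda>i. partial_sum i x) k) :: real)"
    if "x \<in> space M" for k x
    using that unfolding A_def by simp
  have cover: "\<epsilon>^2 * indicator E x \<le> (\<Sum>k\<le>m. (partial_sum k x)^2 * indicator (A k) x)"
    if "x \<in> space M" for x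
  proof (cases "x \<in> E")
    case True
    then obtain k where "k \<le> m" "\<epsilon> < \<bar>partial_sum k x\<bar>"
      unfolding E_def partial_sum_def by blast
    then show ?thesis
      using square_le_sum_first_exceeding[of \<epsilon> k m "\<lambda>i. partial_sum i x"] assms True that
      by (simp add: ind)
  qed (auto intro!: sum_nonneg)
  have disjoint: "(\<Sum>k\<le>m. indicator (A k) x :: real) \<le> 1" if "x \<in> space M" for x
    using sum_of_bool_first_exceeding_le_1[of "{..m}"] that by (simp add: ind)
  have A_ind: "(\<lambda>x. indicator (A k) x :: real) \<in> borel_measurable M" if "k \<le> m" for k
    using A_M[OF that] by simp
  have int_A: "integrable M (\<lambda>x. (partial_sum j x)^2 * indicator (A k) x)" if "k \<le> m" "j \<le> m" for j k
    using that by (intro square_integrable_mult_bounded measurable_partial_sum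
        square_integrable_partial_sum A_ind) auto
  have "\<epsilon>^2 * measure M E = (\<integral>x. \<epsilon>^2 * indicator E x \<partial>M)"
    using E_M by simp
  also have "\<dots> \<le> (\<integral>x. (\<Sum>k\<le>m. (partial_sum k x)^2 * indicator (A k) x) \<partial>M)"
  proof (rule integral_mono[OF _ _ cover])
    show "integrable M (\<lambda>x. \<epsilon>^2 * indicator E x)"
      using E_M by (intro integrable_mult_right integrable_real_indicator) (auto simp: emeasure_eq_measure)
    show "integrable M (\<lambda>x. \<Sum>k\<le>m. (partial_sum k x)^2 * indicator (A k) x)"
      using int_A by (intro Bochner_Integration.integrable_sum) auto
  qed
  also have "\<dots> = (\<Sum>k\<le>m. \<integral>x. (partial_sum k x)^2 * indicator (A k) x \<partial>M)"
    using int_A by (intro Bochner_Integration.integral_sum) auto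
  also have "\<dots> \<le> (\<Sum>k\<le>m. \<integral>x. (partial_sum m x)^2 * indicator (A k) x \<partial>M)"
    by (intro sum_mono integral_partial_sum_square_weighted_mono) (auto intro!: borel_measurable_indicator A_G)
  also have "\<dots> = (\<integral>x. (\<Sum>k\<le>m. (partial_sum m x)^2 * indicator (A k) x) \<partial>M)"
    using int_A by (intro Bochner_Integration.integral_sum[symmetric]) auto
  also have "\<dots> \<le> (\<integral>x. (partial_sum m x)^2 \<partial>M)"
  proof (rule integral_mono)
    show "integrable M (\<lambda>x. \<Sum>k\<le>m. (partial_sum m x)^2 * indicator (A k) x)"
      using int_A by (intro Bochner_Integration.integrable_sum) auto
    show "integrable M (\<lambda>x. (partial_sum m x)^2)"
      using square_integrable_partial_sum by simp
    fix x assume "x \<in> space M"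
    have "(\<Sum>k\<le>m. (partial_sum m x)^2 * indicator (A k) x) = (partial_sum m x)^2 * (\<Sum>k\<le>m. indicator (A k) x)"
      by (simp add: sum_distrib_left)
    also have "\<dots> \<le> (partial_sum m x)^2"
      using disjoint[OF \<open>x \<in> space M\<close>] by (intro mult_left_le) auto
    finally show "(\<Sum>k\<le>m. (partial_sum m x)^2 * indicator (A k) x) \<le> (partial_sum m x)^2" .
  qed
  also have "\<dots> = (\<Sum>j<m. \<integral>x. (D j x)^2 \<partial>M)"
    using integral_partial_sum_square by simp
  finally show ?thesis
    using assms unfolding E_def by (simp add: pos_le_divide_eq mult.commute)
qed

end

lemma orthogonal_increments_cond_exp_residuals:
  assumes "finite_measure M"
    and sub: "\<And>j. j < m \<Longrightarrow> subalgebra M (G j)"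
    and nested: "\<And>i j. i \<le> j \<Longrightarrow> j < m \<Longrightarrow> sets (G i) \<subseteq> sets (G j)"
    and Y_M: "\<And>j. j < m \<Longrightarrow> Y j \<in> borel_measurable M"
    and Y2: "\<And>j. j < m \<Longrightarrow> integrable M (\<lambda>x. (Y j x)^2)"
    and Y_G: "\<And>i j. i < j \<Longrightarrow> j < m \<Longrightarrow> Y i \<in> borel_measurable (G j)"
  shows "orthogonal_increments M G (\<lambda>j x. Y j x - real_cond_exp M (G j) (Y j) x) m"
proof -
  have ce: "finite_measure_subalgebra M (G j)" if "j < m" for j
    using assms(1) sub[OF that]
    by (simp add: finite_measure_subalgebra_def finite_measure_subalgebra_axioms_def)
  show ?thesis
  proof (intro orthogonal_increments.intro[OF assms(1)] orthogonal_increments_axioms.intro)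
    fix j assume j: "j < m"
    interpret finite_measure_subalgebra M "G j" using ce[OF j] .
    show "subalgebra M (G j)" by (rule subalg)
    show "(\<lambda>x. Y j x - real_cond_exp M (G j) (Y j) x) \<in> borel_measurable M"
      using Y_M[OF j] by measurable
    show "integrable M (\<lambda>x. (Y j x - real_cond_exp M (G j) (Y j) x)^2)"
      using integral_square_real_cond_exp_residual(1) Y_M Y2 j by blast
    show "(\<integral>x. Z x * (Y j x - real_cond_exp M (G j) (Y j) x) \<partial>M) = 0"
      if "Z \<in> borel_measurable (G j)" "integrable M (\<lambda>x. (Z x)^2)" for Z
      using integral_mult_real_cond_exp_residual Y_M Y2 j that by blast
  next
    fix i j assume ij: "i < j" "j < m"
    have [measurable]: "Y i \<in> borel_measurable (G j)"
      "real_cond_exp M (G i) (Y i) \<in> borel_measurable (G j)"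
      using Y_G[OF ij] measurable_nested_subalgebra[OF sub sub nested borel_measurable_cond_exp] ij
      by auto
    show "(\<lambda>x. Y i x - real_cond_exp M (G i) (Y i) x) \<in> borel_measurable (G j)"
      by measurable
  qed
qed

section \<open>Moments of fractional Brownian motion\<close>

lemma gaussian_rv_square_integrable:
  assumes "prob_space M" "gaussian_rv M X"
  shows "integrable M (\<lambda>x. (X x)^2)"
proof -
  interpret prob_space M by fact
  have [measurable]: "X \<in> borel_measurable M" using assms(2) unfolding gaussian_rv_def by auto
  from assms(2) consider c where "AE x in M. X x = c"
    | \<mu> \<sigma> where "\<sigma> > 0" "distributed M lborel X (normal_density \<mu> \<sigma>)"
    unfolding gaussian_rv_def by blast
  then show ?thesis
  proof cases
    case (1 c)
    have "integrable M (\<lambda>x. c^2)" by simp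
    then show ?thesis by (rule integrable_cong_AE_imp) (use 1 in auto)
  next
    case (2 \<mu> \<sigma>)
    have "integrable M (\<lambda>x. (X x - \<mu>)^k)" for k
      using distributed_integrable[OF 2(2), of "\<lambda>x. (x - \<mu>)^k"]
        integrable_normal_moment[where k=k and \<mu>=\<mu>, OF 2(1)] by simp
    from this[of 1] this[of 2]
    have "integrable M (\<lambda>x. (X x - \<mu>)^2 + 2*\<mu>*(X x - \<mu>)^1 + \<mu>^2)"
      by (intro Bochner_Integration.integrable_add integrable_mult_right) auto
    then show ?thesis
      by (rule back_subst[where P="integrable M"]) (auto simp: power2_eq_square algebra_simps)
  qed
qed

lemma is_fBm_gaussian_rv:
  assumes "is_fBm M H T B" "t \<in> {0..T}"
  shows "gaussian_rv M (B t)"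
proof -
  have "\<forall>I c. finite I \<longrightarrow> I \<subseteq> {0..T} \<longrightarrow> gaussian_rv M (\<lambda>\<omega>. \<Sum>t\<in>I. c t * B t \<omega>)"
    using assms(1) unfolding is_fBm_def by (elim conjE)
  then have "gaussian_rv M (\<lambda>\<omega>. \<Sum>u\<in>{t}. (\<lambda>_. 1) u * B u \<omega>)"
    using assms(2) by (elim allE[where x="{t}"] allE[where x="\<lambda>_. 1"]) simp
  then show ?thesis by simp
qed

lemma is_fBm_measurable: "is_fBm M H T B \<Longrightarrow> t \<in> {0..T} \<Longrightarrow> B t \<in> borel_measurable M"
  using is_fBm_gaussian_rv unfolding gaussian_rv_def by blast

lemma is_fBm_square_integrable:
  "prob_space M \<Longrightarrow> is_fBm M H T B \<Longrightarrow> t \<in> {0..T} \<Longrightarrow> integrable M (\<lambda>\<omega>. (B t \<omega>)^2)"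
  using gaussian_rv_square_integrable is_fBm_gaussian_rv by blast

lemma is_fBm_increment_variance:
  assumes "prob_space M" "is_fBm M H T B" "s \<in> {0..T}" "t \<in> {0..T}"
  shows "(\<integral>\<omega>. (B t \<omega> - B s \<omega>)^2 \<partial>M) = \<bar>t - s\<bar> powr (2*H)"
proof -
  interpret prob_space M by fact
  have "\<forall>t\<in>{0..T}. \<forall>s\<in>{0..T}. (\<integral>\<omega>. B t \<omega> * B s \<omega> \<partial>M) =
          (t powr (2*H) + s powr (2*H) - \<bar>t - s\<bar> powr (2*H)) / 2"
    using assms(2) unfolding is_fBm_def by (elim conjE)
  then have cov: "(\<integral>\<omega>. B u \<omega> * B v \<omega> \<partial>M) = (u powr (2*H) + v powr (2*H) - \<bar>u - v\<bar> powr (2*H)) / 2"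
    if "u \<in> {s, t}" "v \<in> {s, t}" for u v
    using assms(3,4) that by auto
  have [measurable]: "B s \<in> borel_measurable M" "B t \<in> borel_measurable M"
    using is_fBm_measurable assms by blast+
  have sq: "integrable M (\<lambda>\<omega>. B u \<omega> * B v \<omega>)" if "u \<in> {s, t}" "v \<in> {s, t}" for u v
    using that assms by (intro square_integrable_mult is_fBm_square_integrable) auto
  have "(B t \<omega> - B s \<omega>)^2 = B t \<omega> * B t \<omega> - 2 * (B t \<omega> * B s \<omega>) + B s \<omega> * B s \<omega>" for \<omega>
    by (simp add: power2_eq_square algebra_simps)
  then show ?thesis
    using sq[of t t] sq[of t s] sq[of s s] cov[of t t] cov[of t s] cov[of s s]
    by (simp add: abs_minus_commute)
qed

lemma is_fBm_AE_zero:
  assumes "prob_space M" "is_fBm M H T B" "0 \<le> T"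
  shows "AE \<omega> in M. B 0 \<omega> = 0"
proof -
  interpret prob_space M by fact
  have "\<forall>t\<in>{0..T}. \<forall>s\<in>{0..T}. (\<integral>\<omega>. B t \<omega> * B s \<omega> \<partial>M) =
          (t powr (2*H) + s powr (2*H) - \<bar>t - s\<bar> powr (2*H)) / 2"
    using assms(2) unfolding is_fBm_def by (elim conjE)
  from this[rule_format, of 0 0] have "(\<integral>\<omega>. (B 0 \<omega>)^2 \<partial>M) = 0"
    using assms(3) by (simp add: power2_eq_square)
  then show ?thesis
    using integral_nonneg_eq_0_iff_AE[OF is_fBm_square_integrable[OF assms(1,2)]] assms(3) by simp
qed

section \<open>Partitions and the compensator\<close>

lemma partition_enumeration:
  assumes part: "is_partition T \<theta>" and T: "0 < T"
  obtains m tt where "0 < m" "\<And>i j. i < j \<Longrightarrow> j \<le> m \<Longrightarrow> tt i < tt j" "\<theta> = tt ` {..m}"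
    "tt 0 = 0" "tt m = T"
    "\<And>j. j < m \<Longrightarrow> next_pt \<theta> (tt j) = tt (Suc j)"
    "\<And>j. j < m \<Longrightarrow> tt (Suc j) - tt j \<le> mesh \<theta>"
    "{a\<in>\<theta>. a < Max \<theta>} = tt ` {..<m}"
proof -
  have fin: "finite \<theta>" and sub: "\<theta> \<subseteq> {0..T}" and z: "0 \<in> \<theta>" and TT: "T \<in> \<theta>"
    using part unfolding is_partition_def by auto
  obtain xs where xs: "sorted_wrt (<) xs" "set xs = \<theta>"
    using ex1_sorted_list_for_set_if_finite[OF fin] by blast
  define m where "m = length xs - 1"
  define tt where "tt i = xs ! i" for i
  have "card {0, T} \<le> card \<theta>" using fin z TT by (intro card_mono) auto
  also have "\<dots> \<le> length xs" using xs(2) card_length by blast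
  finally have m0: "0 < m" and lm: "length xs = Suc m" using T unfolding m_def by auto
  have strict: "tt i < tt j" if "i < j" "j \<le> m" for i j
    unfolding tt_def using sorted_wrt_nth_less[OF xs(1) that(1)] that lm by simp
  have mono: "tt i \<le> tt j" if "i \<le> j" "j \<le> m" for i j
    using strict[of i j] that by (cases "i = j") auto
  have img: "\<theta> = tt ` {..m}"
    unfolding xs(2)[symmetric] tt_def set_conv_nth lm by (auto simp: less_Suc_eq_le)
  have inT: "0 \<le> tt i \<and> tt i \<le> T" if "i \<le> m" for i using sub img that by auto
  have t0: "tt 0 = 0"
  proof -
    obtain i where i: "i \<le> m" "tt i = 0" using z img by auto
    show ?thesis using mono[of 0 i] i inT[of 0] by auto
  qed
  have tm: "tt m = T"
  proof -
    obtain i where i: "i \<le> m" "tt i = T" using TT img by auto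
    show ?thesis using mono[of i m] i inT[of m] by auto
  qed
  have Mx: "Max \<theta> = T"
    by (rule Max_eqI) (use fin sub TT in auto)
  have nx: "next_pt \<theta> (tt j) = tt (Suc j)" if j: "j < m" for j
    unfolding next_pt_def
  proof (rule Min_eqI)
    show "finite {b \<in> \<theta>. tt j < b}" using fin by auto
    show "tt (Suc j) \<in> {b \<in> \<theta>. tt j < b}" using img strict[of j "Suc j"] j by auto
    fix y assume "y \<in> {b \<in> \<theta>. tt j < b}"
    then obtain i where i: "i \<le> m" "y = tt i" "tt j < tt i" using img by auto
    have "\<not> i \<le> j" using mono[of i j] i j by auto
    then show "tt (Suc j) \<le> y" using mono[of "Suc j" i] i by auto
  qed
  have lt: "{a\<in>\<theta>. a < Max \<theta>} = tt ` {..<m}"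
  proof
    show "{a\<in>\<theta>. a < Max \<theta>} \<subseteq> tt ` {..<m}"
    proof
      fix a assume "a \<in> {a\<in>\<theta>. a < Max \<theta>}"
      then obtain i where "i \<le> m" "a = tt i" "tt i < T" using img Mx by auto
      then show "a \<in> tt ` {..<m}" using tm by (cases "i = m") auto
    qed
    show "tt ` {..<m} \<subseteq> {a\<in>\<theta>. a < Max \<theta>}"
      using img strict[of _ m] unfolding Mx tm[symmetric] by auto
  qed
  have ms: "tt (Suc j) - tt j \<le> mesh \<theta>" if j: "j < m" for j
  proof -
    have "tt j \<in> {a\<in>\<theta>. a < Max \<theta>}" using lt j by auto
    then show ?thesis unfolding mesh_def nx[OF j, symmetric] using fin by (intro Max_ge) auto
  qed
  show ?thesis using that[OF m0 strict img t0 tm nx ms lt] .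
qed

lemma mesh_nonneg:
  assumes "is_partition T \<theta>" "0 < T"
  shows "0 \<le> mesh \<theta>"
proof -
  obtain m tt where m0: "0 < m" and strict: "\<And>i j. i < j \<Longrightarrow> j \<le> m \<Longrightarrow> tt i < tt j"
    and "\<theta> = tt ` {..m}" "tt 0 = 0" "tt m = T"
    "\<And>j. j < m \<Longrightarrow> next_pt \<theta> (tt j) = tt (Suc j)"
    and ms: "\<And>j. j < m \<Longrightarrow> tt (Suc j) - tt j \<le> mesh \<theta>"
    and "{a\<in>\<theta>. a < Max \<theta>} = tt ` {..<m}"
    by (rule partition_enumeration[OF assms], rule that)
  show ?thesis using strict[of 0 1] ms[of 0] m0 by simp
qed

lemma compensator_eq_sum_enumeration:
  fixes tt :: "nat \<Rightarrow> real"
  assumes strict: "\<And>i j. i < j \<Longrightarrow> j \<le> m \<Longrightarrow> tt i < tt j"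
    and nx: "\<And>j. j < m \<Longrightarrow> next_pt \<theta> (tt j) = tt (Suc j)"
    and lt: "{a\<in>\<theta>. a < Max \<theta>} = tt ` {..<m}"
  shows "compensator M F X \<theta> t \<omega> =
    (\<Sum>j | j < m \<and> tt (Suc j) \<le> t. real_cond_exp M (F (tt j)) (\<lambda>\<omega>. X (tt (Suc j)) \<omega> - X (tt j) \<omega>) \<omega>)"
proof -
  have "{a \<in> \<theta>. a < Max \<theta> \<and> next_pt \<theta> a \<le> t} = {a \<in> tt ` {..<m}. next_pt \<theta> a \<le> t}"
    using lt by blast
  also have "\<dots> = tt ` {j. j < m \<and> tt (Suc j) \<le> t}" using nx by auto
  finally have set: "{a \<in> \<theta>. a < Max \<theta> \<and> next_pt \<theta> a \<le> t} = tt ` {j. j < m \<and> tt (Suc j) \<le> t}" .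
  have inj: "inj_on tt {j. j < m \<and> tt (Suc j) \<le> t}"
  proof (rule inj_onI)
    fix i j assume "i \<in> {j. j < m \<and> tt (Suc j) \<le> t}" "j \<in> {j. j < m \<and> tt (Suc j) \<le> t}" "tt i = tt j"
    then show "i = j" using strict[of i j] strict[of j i] by (cases i j rule: linorder_cases) auto
  qed
  show ?thesis
    unfolding compensator_def set sum.reindex[OF inj] by (auto intro!: sum.cong simp: nx)
qed

lemma enumeration_indices_below:
  fixes tt :: "nat \<Rightarrow> real"
  assumes strict: "\<And>i j. i < j \<Longrightarrow> j \<le> m \<Longrightarrow> tt i < tt j" and k: "k \<le> m"
  shows "{j. j < m \<and> tt (Suc j) \<le> tt k} = {..<k}"
proof (intro set_eqI iffI)
  fix j assume j: "j \<in> {j. j < m \<and> tt (Suc j) \<le> tt k}"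
  show "j \<in> {..<k}"
  proof (rule ccontr)
    assume "j \<notin> {..<k}"
    then have "tt k < tt (Suc j)" using strict[of k "Suc j"] j by auto
    moreover have "tt (Suc j) \<le> tt k" using j by simp
    ultimately show False by linarith
  qed
next
  fix j assume "j \<in> {..<k}"
  then have "j < m" "Suc j \<le> k" using k by auto
  then show "j \<in> {j. j < m \<and> tt (Suc j) \<le> tt k}"
    using strict[of "Suc j" k] k by (cases "Suc j = k") auto
qed

lemma enumeration_locate:
  fixes tt :: "nat \<Rightarrow> real"
  assumes s: "0 \<le> s" "s \<le> T" and m0: "0 < m"
    and strict: "\<And>i j. i < j \<Longrightarrow> j \<le> m \<Longrightarrow> tt i < tt j"
    and t0: "tt 0 = 0" and tm: "tt m = T"
    and ms: "\<And>j. j < m \<Longrightarrow> tt (Suc j) - tt j \<le> h"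
  obtains k where "k \<le> m" "tt k \<le> s" "s - tt k \<le> h" "{j. j < m \<and> tt (Suc j) \<le> s} = {..<k}"
proof -
  have mono: "tt i \<le> tt j" if "i \<le> j" "j \<le> m" for i j
    using strict[of i j] that by (cases "i = j") auto
  define K where "K = {j. j \<le> m \<and> tt j \<le> s}"
  define k where "k = Max K"
  have "finite K" "0 \<in> K" unfolding K_def using t0 s by auto
  then have kK: "k \<in> K" and kmax: "\<And>j. j \<in> K \<Longrightarrow> j \<le> k"
    unfolding k_def by (auto intro: Max_in Max_ge)
  have km: "k \<le> m" and tk: "tt k \<le> s" using kK unfolding K_def by auto
  have "s - tt k \<le> h"
  proof (cases "k < m")
    case True
    then have "s < tt (Suc k)" using kmax[of "Suc k"] unfolding K_def by fastforce
    then show ?thesis using ms[OF True] by linarith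
  next
    case False
    then have "tt k = T" using km tm by (metis le_neq_implies_less)
    moreover have "0 \<le> h" using ms[OF m0] strict[of 0 1] m0 by simp
    ultimately show ?thesis using s by simp
  qed
  moreover have "{j. j < m \<and> tt (Suc j) \<le> s} = {..<k}"
  proof (intro set_eqI iffI)
    fix j assume "j \<in> {j. j < m \<and> tt (Suc j) \<le> s}"
    then have "Suc j \<in> K" unfolding K_def by auto
    then show "j \<in> {..<k}" using kmax by fastforce
  next
    fix j assume "j \<in> {..<k}"
    then show "j \<in> {j. j < m \<and> tt (Suc j) \<le> s}" using mono[of "Suc j" k] km tk by auto
  qed
  ultimately show ?thesis using that km tk by blast
qed

text \<open>The compensator is a step function which jumps only at partition points.\<close>
lemma partition_point_below:
  assumes "is_partition T \<theta>" "0 < T" "t \<in> {0..T}"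
  obtains a where "a \<in> \<theta>" "a \<le> t" "t - a \<le> mesh \<theta>"
    "\<And>\<omega>. compensator M F X \<theta> t \<omega> = compensator M F X \<theta> a \<omega>"
proof -
  obtain m tt where m0: "0 < m" and strict: "\<And>i j. i < j \<Longrightarrow> j \<le> m \<Longrightarrow> tt i < tt j"
    and img: "\<theta> = tt ` {..m}" and t0: "tt 0 = 0" and tm: "tt m = T"
    and nx: "\<And>j. j < m \<Longrightarrow> next_pt \<theta> (tt j) = tt (Suc j)"
    and ms: "\<And>j. j < m \<Longrightarrow> tt (Suc j) - tt j \<le> mesh \<theta>"
    and lt: "{a\<in>\<theta>. a < Max \<theta>} = tt ` {..<m}"
    by (rule partition_enumeration[OF assms(1,2)], rule that)
  obtain k where k: "k \<le> m" "tt k \<le> t" "t - tt k \<le> mesh \<theta>"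
    and below: "{j. j < m \<and> tt (Suc j) \<le> t} = {..<k}"
    using enumeration_locate[of t T m tt] assms(3) m0 strict t0 tm ms by auto
  show ?thesis
  proof (rule that[of "tt k"])
    show "tt k \<in> \<theta>" using img k(1) by auto
    show "compensator M F X \<theta> t \<omega> = compensator M F X \<theta> (tt k) \<omega>" for \<omega>
      using below enumeration_indices_below[where tt=tt and m=m, OF strict k(1)]
      by (simp add: compensator_eq_sum_enumeration[OF strict nx lt])
  qed (use k in auto)
qed

lemma sum_powr_increments_le:
  fixes tt :: "nat \<Rightarrow> real"
  assumes q: "1 \<le> q" and mono: "\<And>j. j < m \<Longrightarrow> tt j \<le> tt (Suc j)"
    and h: "\<And>j. j < m \<Longrightarrow> tt (Suc j) - tt j \<le> h"
  shows "(\<Sum>j<m. (tt (Suc j) - tt j) powr q) \<le> h powr (q - 1) * (tt m - tt 0)"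
proof -
  have "(tt (Suc j) - tt j) powr q \<le> h powr (q - 1) * (tt (Suc j) - tt j)" if j: "j < m" for j
  proof -
    let ?\<Delta> = "tt (Suc j) - tt j"
    have "?\<Delta> powr q = ?\<Delta> * ?\<Delta> powr (q - 1)"
      using mono[OF j] powr_mult_base[of ?\<Delta> "q - 1"] by simp
    also have "\<dots> \<le> ?\<Delta> * h powr (q - 1)"
      using mono[OF j] h[OF j] q by (intro mult_left_mono powr_mono2) auto
    finally show ?thesis by (simp add: mult.commute)
  qed
  then have "(\<Sum>j<m. (tt (Suc j) - tt j) powr q) \<le> (\<Sum>j<m. h powr (q - 1) * (tt (Suc j) - tt j))"
    by (intro sum_mono) auto
  also have "\<dots> = h powr (q - 1) * (tt m - tt 0)"
    by (simp add: sum_distrib_left[symmetric] sum_lessThan_telescope)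
  finally show ?thesis .
qed

lemma compensator_at_enumeration:
  fixes tt :: "nat \<Rightarrow> real"
  assumes strict: "\<And>i j. i < j \<Longrightarrow> j \<le> m \<Longrightarrow> tt i < tt j"
    and nx: "\<And>j. j < m \<Longrightarrow> next_pt \<theta> (tt j) = tt (Suc j)"
    and lt: "{a\<in>\<theta>. a < Max \<theta>} = tt ` {..<m}" and k: "k \<le> m"
  shows "X (tt k) \<omega> - X (tt 0) \<omega> - compensator M F X \<theta> (tt k) \<omega>
    = (\<Sum>j<k. (X (tt (Suc j)) \<omega> - X (tt j) \<omega>)
         - real_cond_exp M (F (tt j)) (\<lambda>\<omega>. X (tt (Suc j)) \<omega> - X (tt j) \<omega>) \<omega>)"
  using sum_lessThan_telescope[of "\<lambda>j. X (tt j) \<omega>" k]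
  by (simp add: compensator_eq_sum_enumeration[OF strict nx lt]
      enumeration_indices_below[where tt=tt and m=m, OF strict k] sum_subtractf)

theorem compensator_maximal_inequality:
  fixes X :: "real \<Rightarrow> 'a \<Rightarrow> real"
  assumes "prob_space M" and \<theta>: "is_partition T \<theta>" "0 < T" and "0 < \<epsilon>" "1 \<le> q"
    and subalg: "\<And>t. t \<in> {0..T} \<Longrightarrow> subalgebra M (F t)"
    and mono: "\<And>s t. 0 \<le> s \<Longrightarrow> s \<le> t \<Longrightarrow> t \<le> T \<Longrightarrow> sets (F s) \<subseteq> sets (F t)"
    and adapted: "\<And>t. t \<in> {0..T} \<Longrightarrow> X t \<in> borel_measurable (F t)"
    and X2: "\<And>t. t \<in> {0..T} \<Longrightarrow> integrable M (\<lambda>\<omega>. (X t \<omega>)^2)"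
    and incr: "\<And>s t. 0 \<le> s \<Longrightarrow> s \<le> t \<Longrightarrow> t \<le> T \<Longrightarrow>
                 (\<integral>\<omega>. (X t \<omega> - X s \<omega>)^2 \<partial>M) \<le> (t - s) powr q"
  shows "{\<omega>\<in>space M. \<exists>a\<in>\<theta>. \<epsilon> < \<bar>X a \<omega> - X 0 \<omega> - compensator M F X \<theta> a \<omega>\<bar>} \<in> sets M"
    and "measure M {\<omega>\<in>space M. \<exists>a\<in>\<theta>. \<epsilon> < \<bar>X a \<omega> - X 0 \<omega> - compensator M F X \<theta> a \<omega>\<bar>}
           \<le> T * mesh \<theta> powr (q - 1) / \<epsilon>^2"
proof -
  interpret prob_space M by fact
  obtain m tt where m0: "0 < m" and strict: "\<And>i j. i < j \<Longrightarrow> j \<le> m \<Longrightarrow> tt i < tt j"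
    and img: "\<theta> = tt ` {..m}" and t0: "tt 0 = 0" and tm: "tt m = T"
    and nx: "\<And>j. j < m \<Longrightarrow> next_pt \<theta> (tt j) = tt (Suc j)"
    and ms: "\<And>j. j < m \<Longrightarrow> tt (Suc j) - tt j \<le> mesh \<theta>"
    and lt: "{a\<in>\<theta>. a < Max \<theta>} = tt ` {..<m}"
    by (rule partition_enumeration[OF \<theta>], rule that)
  have ttT: "tt i \<in> {0..T}" if "i \<le> m" for i
    using img \<theta>(1) that unfolding is_partition_def by auto
  have tt_mono: "tt i \<le> tt j" if "i \<le> j" "j \<le> m" for i j
    using strict[of i j] that by (cases "i = j") auto
  have X_M: "X t \<in> borel_measurable M" if "t \<in> {0..T}" for t
    using measurable_from_subalg[OF subalg adapted] that by blast
  have ce: "finite_measure_subalgebra M (F t)" if "t \<in> {0..T}" for t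
    using subalg[OF that]
    by (intro finite_measure_subalgebra.intro finite_measure_subalgebra_axioms.intro) unfold_locales
  define \<Delta> where "\<Delta> j = (\<lambda>\<omega>. X (tt (Suc j)) \<omega> - X (tt j) \<omega>)" for j
  define D where "D j \<omega> = \<Delta> j \<omega> - real_cond_exp M (F (tt j)) (\<Delta> j) \<omega>" for j \<omega>
  have \<Delta>_M: "\<Delta> j \<in> borel_measurable M" if "j < m" for j
    unfolding \<Delta>_def using X_M ttT that by (intro borel_measurable_diff) auto
  have \<Delta>2: "integrable M (\<lambda>\<omega>. (\<Delta> j \<omega>)^2)" if "j < m" for j
    unfolding \<Delta>_def using X_M X2 ttT that by (intro square_integrable_diff) auto
  interpret orthogonal_increments M "\<lambda>j. F (tt j)" D m
    unfolding D_def
  proof (rule orthogonal_increments_cond_exp_residuals[OF _ _ _ \<Delta>_M \<Delta>2])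
    show "finite_measure M" by unfold_locales
    show "subalgebra M (F (tt j))" if "j < m" for j using subalg ttT that by simp
    show "sets (F (tt i)) \<subseteq> sets (F (tt j))" if "i \<le> j" "j < m" for i j
      using mono ttT tt_mono that by auto
    show "\<Delta> i \<in> borel_measurable (F (tt j))" if "i < j" "j < m" for i j
    proof -
      have "X (tt l) \<in> borel_measurable (F (tt j))" if "l \<le> j" for l
        by (rule measurable_nested_subalgebra[OF subalg subalg mono adapted])
          (use ttT tt_mono \<open>j < m\<close> that in auto)
      then show ?thesis unfolding \<Delta>_def using that by (intro borel_measurable_diff) auto
    qed
  qed
  have at_points: "X (tt k) \<omega> - X 0 \<omega> - compensator M F X \<theta> (tt k) \<omega> = (\<Sum>j<k. D j \<omega>)"
    if "k \<le> m" for k \<omega>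
    using compensator_at_enumeration[OF strict nx lt that] t0 unfolding D_def \<Delta>_def by simp
  have event: "{\<omega>\<in>space M. \<exists>a\<in>\<theta>. \<epsilon> < \<bar>X a \<omega> - X 0 \<omega> - compensator M F X \<theta> a \<omega>\<bar>}
      = {\<omega>\<in>space M. \<exists>k\<le>m. \<epsilon> < \<bar>\<Sum>j<k. D j \<omega>\<bar>}"
  proof -
    have "(\<exists>a\<in>\<theta>. P a) \<longleftrightarrow> (\<exists>k\<le>m. P (tt k))" for P using img by blast
    then show ?thesis by (auto simp: at_points)
  qed
  have "(\<Sum>j<m. \<integral>\<omega>. (D j \<omega>)^2 \<partial>M) \<le> (\<Sum>j<m. \<integral>\<omega>. (\<Delta> j \<omega>)^2 \<partial>M)"
    unfolding D_def using ce ttT \<Delta>_M \<Delta>2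
    by (intro sum_mono finite_measure_subalgebra.integral_square_real_cond_exp_residual_le) auto
  also have "\<dots> \<le> (\<Sum>j<m. (tt (Suc j) - tt j) powr q)"
    unfolding \<Delta>_def using ttT tt_mono by (intro sum_mono incr) auto
  also have "\<dots> \<le> mesh \<theta> powr (q - 1) * (tt m - tt 0)"
    using tt_mono ms \<open>1 \<le> q\<close> by (intro sum_powr_increments_le) auto
  finally have "(\<Sum>j<m. \<integral>\<omega>. (D j \<omega>)^2 \<partial>M) \<le> T * mesh \<theta> powr (q - 1)"
    using t0 tm by (simp add: mult.commute)
  then show "measure M {\<omega>\<in>space M. \<exists>a\<in>\<theta>. \<epsilon> < \<bar>X a \<omega> - X 0 \<omega> - compensator M F X \<theta> a \<omega>\<bar>}
           \<le> T * mesh \<theta> powr (q - 1) / \<epsilon>^2"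
    unfolding event using kolmogorov_maximal_inequality[OF \<open>0 < \<epsilon>\<close>]
    by (meson divide_right_mono order_trans zero_le_power2)
  show "{\<omega>\<in>space M. \<exists>a\<in>\<theta>. \<epsilon> < \<bar>X a \<omega> - X 0 \<omega> - compensator M F X \<theta> a \<omega>\<bar>} \<in> sets M"
    unfolding event by (rule sets_exceeding_partial_sums)
qed

section \<open>Oscillation of continuous paths\<close>

lemma Rats_dense_in_atLeastAtMost:
  fixes T t e :: real
  assumes "0 < T" "t \<in> {0..T}" "0 < e"
  shows "\<exists>q\<in>\<rat> \<inter> {0..T}. \<bar>q - t\<bar> < e"
proof (cases "t < T")
  case True
  then obtain q where "q \<in> \<rat>" "t < q" "q < min T (t + e)"
    using Rats_dense_in_real[of t "min T (t + e)"] assms by auto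
  then show ?thesis using assms by (intro bexI[of _ q]) auto
next
  case False
  then have "t = T" using assms by auto
  obtain q where "q \<in> \<rat>" "max 0 (T - e) < q" "q < T"
    using Rats_dense_in_real[of "max 0 (T - e)" T] assms by auto
  then show ?thesis using \<open>t = T\<close> by (intro bexI[of _ q]) auto
qed

lemma continuous_on_modulus_from_dense:
  fixes f :: "real \<Rightarrow> real"
  assumes cont: "continuous_on S f" and "Q \<subseteq> S"
    and dense: "\<And>s e. s \<in> S \<Longrightarrow> 0 < e \<Longrightarrow> \<exists>q\<in>Q. \<bar>q - s\<bar> < e"
    and modulus: "\<And>q r. q \<in> Q \<Longrightarrow> r \<in> Q \<Longrightarrow> \<bar>q - r\<bar> < h \<Longrightarrow> \<bar>f q - f r\<bar> \<le> \<epsilon>"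
    and s: "s \<in> S" and t: "t \<in> S" and st: "\<bar>s - t\<bar> < h"
  shows "\<bar>f s - f t\<bar> \<le> \<epsilon>"
proof (rule field_le_epsilon)
  fix \<eta> :: real assume \<eta>: "0 < \<eta>"
  obtain \<gamma>s where "\<gamma>s > 0" and \<gamma>s: "\<And>x. x \<in> S \<Longrightarrow> dist x s < \<gamma>s \<Longrightarrow> dist (f x) (f s) < \<eta>/2"
    using cont s \<eta> unfolding continuous_on_iff by (metis half_gt_zero)
  obtain \<gamma>t where "\<gamma>t > 0" and \<gamma>t: "\<And>x. x \<in> S \<Longrightarrow> dist x t < \<gamma>t \<Longrightarrow> dist (f x) (f t) < \<eta>/2"
    using cont t \<eta> unfolding continuous_on_iff by (metis half_gt_zero)
  define r where "r = (h - \<bar>s - t\<bar>) / 2"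
  have "r > 0" using st unfolding r_def by simp
  obtain q where q: "q \<in> Q" "\<bar>q - s\<bar> < min \<gamma>s r"
    using dense[OF s, of "min \<gamma>s r"] \<open>\<gamma>s > 0\<close> \<open>r > 0\<close> by auto
  obtain q' where q': "q' \<in> Q" "\<bar>q' - t\<bar> < min \<gamma>t r"
    using dense[OF t, of "min \<gamma>t r"] \<open>\<gamma>t > 0\<close> \<open>r > 0\<close> by auto
  have "\<bar>q - s\<bar> < r" "\<bar>q' - t\<bar> < r" using q q' by auto
  moreover have "\<bar>q - q'\<bar> \<le> \<bar>q - s\<bar> + \<bar>s - t\<bar> + \<bar>q' - t\<bar>"
    using dist_triangle[of q q' s] dist_triangle[of s q' t] by (simp add: dist_real_def abs_minus_commute)
  moreover have "h = \<bar>s - t\<bar> + 2 * r" unfolding r_def by (simp add: field_simps)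
  ultimately have "\<bar>q - q'\<bar> < h" by linarith
  then have "\<bar>f q - f q'\<bar> \<le> \<epsilon>" using modulus q q' by blast
  moreover have "\<bar>f q - f s\<bar> < \<eta>/2" using \<gamma>s[of q] q \<open>Q \<subseteq> S\<close> by (auto simp: dist_real_def)
  moreover have "\<bar>f q' - f t\<bar> < \<eta>/2" using \<gamma>t[of q'] q' \<open>Q \<subseteq> S\<close> by (auto simp: dist_real_def)
  ultimately show "\<bar>f s - f t\<bar> \<le> \<epsilon> + \<eta>" by linarith
qed

lemma uniformly_continuous_on_inverse_Suc:
  fixes f :: "real \<Rightarrow> real"
  assumes "compact S" "continuous_on S f" "0 < \<epsilon>"
  obtains N where "\<And>q r. q \<in> S \<Longrightarrow> r \<in> S \<Longrightarrow> \<bar>q - r\<bar> < 1 / Suc N \<Longrightarrow> \<bar>f q - f r\<bar> \<le> \<epsilon>"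
proof -
  obtain \<gamma> where "\<gamma> > 0" and \<gamma>: "\<And>s t. s \<in> S \<Longrightarrow> t \<in> S \<Longrightarrow> dist t s < \<gamma> \<Longrightarrow> dist (f t) (f s) < \<epsilon>"
    using compact_uniformly_continuous[OF assms(2,1)] \<open>0 < \<epsilon>\<close>
    unfolding uniformly_continuous_on_def by metis
  obtain N where N: "1 / Suc N < \<gamma>"
    using reals_Archimedean[OF \<open>\<gamma> > 0\<close>] by (auto simp: inverse_eq_divide)
  show ?thesis
  proof (rule that[of N])
    fix q r assume "q \<in> S" "r \<in> S" "\<bar>q - r\<bar> < 1 / Suc N"
    then show "\<bar>f q - f r\<bar> \<le> \<epsilon>" using \<gamma>[of r q] N by (simp add: dist_real_def)
  qed
qed

text \<open>The oscillation events are taken over the countable set \<open>\<rat> \<inter> [0,T]\<close> so that they are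
  measurable; by continuity this controls the oscillation over all of \<open>[0,T]\<close>.\<close>
lemma (in prob_space) continuous_process_modulus:
  fixes X :: "real \<Rightarrow> 'a \<Rightarrow> real"
  assumes "0 < T" and X_M: "\<And>t. t \<in> {0..T} \<Longrightarrow> X t \<in> borel_measurable M"
    and cont: "\<And>\<omega>. \<omega> \<in> space M \<Longrightarrow> continuous_on {0..T} (\<lambda>t. X t \<omega>)"
    and "0 < \<epsilon>" "0 < \<delta>"
  obtains h E where "0 < h" "E \<in> sets M" "prob E < \<delta>"
    "\<And>\<omega> s t. \<omega> \<in> space M - E \<Longrightarrow> s \<in> {0..T} \<Longrightarrow> t \<in> {0..T} \<Longrightarrow> \<bar>s - t\<bar> < h \<Longrightarrow>
       \<bar>X s \<omega> - X t \<omega>\<bar> \<le> \<epsilon>"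
proof -
  define Q where "Q = \<rat> \<inter> {0..T}"
  define G where "G N = {\<omega>\<in>space M. \<forall>q\<in>Q. \<forall>r\<in>Q. \<bar>q - r\<bar> < 1 / Suc N \<longrightarrow> \<bar>X q \<omega> - X r \<omega>\<bar> \<le> \<epsilon>}"
    for N
  have "countable Q" unfolding Q_def using countable_rat by (rule countable_subset[rotated]) auto
  have [measurable]: "X q \<in> borel_measurable M" if "q \<in> Q" for q
    using X_M that unfolding Q_def by auto
  have G_M: "G N \<in> sets M" for N
    unfolding G_def using \<open>countable Q\<close> by measurable
  have "incseq G"
  proof (rule incseq_SucI, rule subsetI)
    fix N \<omega> assume "\<omega> \<in> G N"
    then have "\<omega> \<in> space M" and modulus: "\<And>q r. q \<in> Q \<Longrightarrow> r \<in> Q \<Longrightarrow> \<bar>q - r\<bar> < 1 / Suc N \<Longrightarrow>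
        \<bar>X q \<omega> - X r \<omega>\<bar> \<le> \<epsilon>"
      unfolding G_def by auto
    moreover have "1 / real (Suc (Suc N)) \<le> 1 / Suc N" by (intro divide_left_mono) auto
    ultimately show "\<omega> \<in> G (Suc N)" unfolding G_def by (auto intro!: modulus)
  qed
  have "space M \<subseteq> (\<Union>N. G N)"
  proof
    fix \<omega> assume \<omega>: "\<omega> \<in> space M"
    obtain N where "\<And>q r. q \<in> {0..T} \<Longrightarrow> r \<in> {0..T} \<Longrightarrow> \<bar>q - r\<bar> < 1 / Suc N \<Longrightarrow>
        \<bar>X q \<omega> - X r \<omega>\<bar> \<le> \<epsilon>"
      using uniformly_continuous_on_inverse_Suc[OF compact_Icc cont[OF \<omega>] \<open>0 < \<epsilon>\<close>] by blast
    then have "\<omega> \<in> G N" unfolding G_def Q_def using \<omega> by auto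
    then show "\<omega> \<in> (\<Union>N. G N)" by blast
  qed
  then have "(\<Union>N. G N) = space M" unfolding G_def by auto
  moreover have "(\<lambda>N. prob (G N)) \<longlonglongrightarrow> prob (\<Union>N. G N)"
    using G_M \<open>incseq G\<close> by (intro Lim_measure_incseq) auto
  ultimately have "(\<lambda>N. prob (G N)) \<longlonglongrightarrow> 1" using prob_space by simp
  then have "\<forall>\<^sub>F N in sequentially. 1 - \<delta> < prob (G N)"
    using \<open>0 < \<delta>\<close> by (intro order_tendstoD(1)) auto
  then obtain N where N: "1 - \<delta> < prob (G N)"
    by (auto simp: eventually_sequentially)
  show ?thesis
  proof (rule that[of "1 / Suc N" "space M - G N"])
    show "space M - G N \<in> sets M" using G_M by auto
    show "prob (space M - G N) < \<delta>" using N prob_compl[OF G_M] by simp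
    fix \<omega> s t assume "\<omega> \<in> space M - (space M - G N)"
      and st: "s \<in> {0..T}" "t \<in> {0..T}" "\<bar>s - t\<bar> < 1 / Suc N"
    then have "\<omega> \<in> space M" and modulus: "\<And>q r. q \<in> Q \<Longrightarrow> r \<in> Q \<Longrightarrow> \<bar>q - r\<bar> < 1 / Suc N \<Longrightarrow>
        \<bar>X q \<omega> - X r \<omega>\<bar> \<le> \<epsilon>"
      unfolding G_def by auto
    show "\<bar>X s \<omega> - X t \<omega>\<bar> \<le> \<epsilon>"
    proof (rule continuous_on_modulus_from_dense[OF cont[OF \<open>\<omega> \<in> space M\<close>] _ _ modulus st])
      show "Q \<subseteq> {0..T}" unfolding Q_def by auto
      show "\<exists>q\<in>Q. \<bar>q - s'\<bar> < e" if "s' \<in> {0..T}" "0 < e" for s' e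
        unfolding Q_def by (rule Rats_dense_in_atLeastAtMost[OF \<open>0 < T\<close> that])
    qed
  qed simp
qed

lemma sup_abs_diff_compensator_le:
  assumes \<theta>: "is_partition T \<theta>" "0 < T"
    and osc: "\<And>s t. s \<in> {0..T} \<Longrightarrow> t \<in> {0..T} \<Longrightarrow> \<bar>s - t\<bar> \<le> mesh \<theta> \<Longrightarrow> \<bar>X s \<omega> - X t \<omega>\<bar> \<le> \<eta>"
    and at_points: "\<And>a. a \<in> \<theta> \<Longrightarrow> \<bar>X a \<omega> - X 0 \<omega> - compensator M F X \<theta> a \<omega>\<bar> \<le> \<eta>'"
    and X0: "X 0 \<omega> = 0"
  shows "(SUP t\<in>{0..T}. \<bar>X t \<omega> - compensator M F X \<theta> t \<omega>\<bar>) \<le> \<eta> + \<eta>'"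
proof (rule cSUP_least)
  show "{0..T} \<noteq> {}" using \<theta> by simp
  fix t assume t: "t \<in> {0..T}"
  obtain a where a: "a \<in> \<theta>" "a \<le> t" "t - a \<le> mesh \<theta>"
    and comp: "compensator M F X \<theta> t \<omega> = compensator M F X \<theta> a \<omega>"
    using partition_point_below[OF \<theta> t, where M=M and F=F and X=X] by metis
  have "a \<in> {0..T}" using a \<theta> unfolding is_partition_def by auto
  then have "\<bar>X t \<omega> - X a \<omega>\<bar> \<le> \<eta>" using osc[OF t] a by auto
  moreover have "\<bar>X t \<omega> - compensator M F X \<theta> t \<omega>\<bar>
      \<le> \<bar>X t \<omega> - X a \<omega>\<bar> + \<bar>X a \<omega> - X 0 \<omega> - compensator M F X \<theta> a \<omega>\<bar>"
    using abs_triangle_ineq[of "X t \<omega> - X a \<omega>" "X a \<omega> - X 0 \<omega> - compensator M F X \<theta> a \<omega>"]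
    by (simp add: comp X0)
  ultimately show "\<bar>X t \<omega> - compensator M F X \<theta> t \<omega>\<bar> \<le> \<eta> + \<eta>'"
    using at_points[OF a(1)] by linarith

qed

lemma fBm_compensator_deviation_event:
  assumes "prob_space M" "1/2 < H" "0 < T" "usual_filtration M T F" and fBm: "is_fBm M H T B"
    and adapted: "\<forall>t\<in>{0..T}. B t \<in> borel_measurable (F t)"
    and part: "is_partition T \<theta>" and "0 < \<epsilon>" and "E1 \<in> sets M"
    and osc: "\<And>\<omega> s t. \<omega> \<in> space M - E1 \<Longrightarrow> s \<in> {0..T} \<Longrightarrow> t \<in> {0..T} \<Longrightarrow>
                \<bar>s - t\<bar> \<le> mesh \<theta> \<Longrightarrow> \<bar>B s \<omega> - B t \<omega>\<bar> \<le> \<epsilon>/3"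
  obtains E where "E \<in> sets M" "measure M E \<le> measure M E1 + T * mesh \<theta> powr (2*H - 1) / (\<epsilon>/3)^2"
    "{\<omega>\<in>space M. \<epsilon> < (SUP t\<in>{0..T}. \<bar>B t \<omega> - compensator M F B \<theta> t \<omega>\<bar>)} \<subseteq> E"
proof -
  interpret prob_space M by fact
  have subalg: "\<And>t. t \<in> {0..T} \<Longrightarrow> subalgebra M (F t)"
    and mono: "\<And>s t. 0 \<le> s \<Longrightarrow> s \<le> t \<Longrightarrow> t \<le> T \<Longrightarrow> sets (F s) \<subseteq> sets (F t)"
    using \<open>usual_filtration M T F\<close> unfolding usual_filtration_def by auto
  define Z where "Z = {\<omega>\<in>space M. B 0 \<omega> \<noteq> 0}"
  have [measurable]: "B 0 \<in> borel_measurable M" using is_fBm_measurable[OF fBm] \<open>0 < T\<close> by simp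
  have Z: "Z \<in> sets M" unfolding Z_def by measurable
  then have "prob Z = 0"
    using is_fBm_AE_zero[OF \<open>prob_space M\<close> fBm] \<open>0 < T\<close> AE_iff_measurable[of Z M]
    unfolding Z_def by (simp add: measure_def)
  define K where
    "K = {\<omega>\<in>space M. \<exists>a\<in>\<theta>. \<epsilon>/3 < \<bar>B a \<omega> - B 0 \<omega> - compensator M F B \<theta> a \<omega>\<bar>}"
  have incr: "(\<integral>\<omega>. (B t \<omega> - B s \<omega>)^2 \<partial>M) \<le> (t - s) powr (2*H)"
    if "0 \<le> s" "s \<le> t" "t \<le> T" for s t
    using is_fBm_increment_variance[OF \<open>prob_space M\<close> fBm, of s t] that by simp
  have K: "K \<in> sets M" "prob K \<le> T * mesh \<theta> powr (2*H - 1) / (\<epsilon>/3)^2"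
    using compensator_maximal_inequality[OF \<open>prob_space M\<close> part \<open>0 < T\<close> _ _ subalg mono _
        is_fBm_square_integrable[OF \<open>prob_space M\<close> fBm] incr, of "\<epsilon>/3"]
      \<open>0 < \<epsilon>\<close> \<open>1/2 < H\<close> adapted
    unfolding K_def by auto
  show ?thesis
  proof (rule that[of "E1 \<union> Z \<union> K"])
    show "E1 \<union> Z \<union> K \<in> sets M" using \<open>E1 \<in> sets M\<close> Z K by auto
    have "prob (E1 \<union> Z \<union> K) \<le> prob (E1 \<union> Z) + prob K"
      using \<open>E1 \<in> sets M\<close> Z K(1) by (intro measure_Un_le) auto
    also have "\<dots> \<le> prob E1 + prob Z + prob K"
      using \<open>E1 \<in> sets M\<close> Z measure_Un_le[of E1 M Z] by simp
    finally show "prob (E1 \<union> Z \<union> K) \<le> prob E1 + T * mesh \<theta> powr (2*H - 1) / (\<epsilon>/3)^2"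
      using \<open>prob Z = 0\<close> K(2) by linarith
    show "{\<omega>\<in>space M. \<epsilon> < (SUP t\<in>{0..T}. \<bar>B t \<omega> - compensator M F B \<theta> t \<omega>\<bar>)} \<subseteq> E1 \<union> Z \<union> K"
    proof (rule subsetI, rule ccontr)
      fix \<omega> assume \<omega>: "\<omega> \<in> {\<omega>\<in>space M. \<epsilon> < (SUP t\<in>{0..T}. \<bar>B t \<omega> - compensator M F B \<theta> t \<omega>\<bar>)}"
        and out: "\<omega> \<notin> E1 \<union> Z \<union> K"
      have "(SUP t\<in>{0..T}. \<bar>B t \<omega> - compensator M F B \<theta> t \<omega>\<bar>) \<le> \<epsilon>/3 + \<epsilon>/3"
      proof (rule sup_abs_diff_compensator_le[OF part \<open>0 < T\<close>])
        show "\<bar>B s \<omega> - B t \<omega>\<bar> \<le> \<epsilon>/3"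
          if "s \<in> {0..T}" "t \<in> {0..T}" "\<bar>s - t\<bar> \<le> mesh \<theta>" for s t
          using osc[of \<omega> s t] that \<omega> out by auto
        show "\<bar>B a \<omega> - B 0 \<omega> - compensator M F B \<theta> a \<omega>\<bar> \<le> \<epsilon>/3" if "a \<in> \<theta>" for a
          using out \<omega> that unfolding K_def by auto
        show "B 0 \<omega> = 0" using out \<omega> unfolding Z_def by auto
      qed
      then show False using \<omega> \<open>0 < \<epsilon>\<close> by simp
    qed
  qed
qed

theorem theorem2p1:
  fixes M :: "'a measure" and F :: "real \<Rightarrow> 'a measure"
    and B :: "real \<Rightarrow> 'a \<Rightarrow> real" and H T :: real and \<theta> :: "nat \<Rightarrow> real set"
  assumes "prob_space M"
    and "1/2 < H" and "H < 1" and "T > 0"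
    and "usual_filtration M T F"
    and "is_fBm M H T B"
    and "\<forall>t\<in>{0..T}. B t \<in> borel_measurable (F t)"
    and "normally_condensing T \<theta>"
  shows "\<forall>\<epsilon>>0. \<forall>\<delta>>0. \<exists>N. \<forall>n\<ge>N. \<exists>E\<in>sets M. measure M E < \<delta> \<and>
           {\<omega>\<in>space M. (SUP t\<in>{0..T}. \<bar>B t \<omega> - compensator M F B (\<theta> n) t \<omega>\<bar>) > \<epsilon>} \<subseteq> E"
proof (intro allI impI)
  fix \<epsilon> \<delta> :: real assume "0 < \<epsilon>" "0 < \<delta>"
  interpret prob_space M by fact
  have part: "\<And>n. is_partition T (\<theta> n)" and mesh_0: "(\<lambda>n. mesh (\<theta> n)) \<longlonglongrightarrow> 0"
    using \<open>normally_condensing T \<theta>\<close> unfolding normally_condensing_def by auto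
  have cont: "\<And>\<omega>. \<omega> \<in> space M \<Longrightarrow> continuous_on {0..T} (\<lambda>t. B t \<omega>)"
    using \<open>is_fBm M H T B\<close> unfolding is_fBm_def by blast
  have "0 < \<epsilon>/3" "0 < \<delta>/2" using \<open>0 < \<epsilon>\<close> \<open>0 < \<delta>\<close> by simp_all
  then obtain h E1 where "0 < h" "E1 \<in> sets M" "prob E1 < \<delta>/2" and osc:
      "\<And>\<omega> s t. \<omega> \<in> space M - E1 \<Longrightarrow> s \<in> {0..T} \<Longrightarrow> t \<in> {0..T} \<Longrightarrow> \<bar>s - t\<bar> < h \<Longrightarrow>
         \<bar>B s \<omega> - B t \<omega>\<bar> \<le> \<epsilon>/3"
    using continuous_process_modulus[OF \<open>T > 0\<close> is_fBm_measurable[OF \<open>is_fBm M H T B\<close>] cont]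
    by blast
  have "(\<lambda>n. mesh (\<theta> n) powr (2*H - 1)) \<longlonglongrightarrow> 0"
    using mesh_nonneg[OF part \<open>T > 0\<close>] \<open>1/2 < H\<close> by (intro tendsto_zero_powrI[OF mesh_0]) auto
  then have "(\<lambda>n. T * mesh (\<theta> n) powr (2*H - 1) / (\<epsilon>/3)^2) \<longlonglongrightarrow> 0"
    by (intro tendsto_divide_zero tendsto_mult_right_zero)
  then have "\<forall>\<^sub>F n in sequentially. T * mesh (\<theta> n) powr (2*H - 1) / (\<epsilon>/3)^2 < \<delta>/2"
    using \<open>0 < \<delta>/2\<close> by (rule order_tendstoD(2))
  moreover have "\<forall>\<^sub>F n in sequentially. mesh (\<theta> n) < h"
    using mesh_0 \<open>0 < h\<close> by (rule order_tendstoD(2))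
  ultimately have "\<forall>\<^sub>F n in sequentially.
      T * mesh (\<theta> n) powr (2*H - 1) / (\<epsilon>/3)^2 < \<delta>/2 \<and> mesh (\<theta> n) < h"
    by (rule eventually_conj)
  then obtain N where N: "\<And>n. N \<le> n \<Longrightarrow>
      T * mesh (\<theta> n) powr (2*H - 1) / (\<epsilon>/3)^2 < \<delta>/2 \<and> mesh (\<theta> n) < h"
    unfolding eventually_sequentially by blast
  show "\<exists>N. \<forall>n\<ge>N. \<exists>E\<in>sets M. prob E < \<delta> \<and>
           {\<omega>\<in>space M. (SUP t\<in>{0..T}. \<bar>B t \<omega> - compensator M F B (\<theta> n) t \<omega>\<bar>) > \<epsilon>} \<subseteq> E"
  proof (intro exI[of _ N] allI impI)
    fix n assume "N \<le> n"
    have "\<bar>B s \<omega> - B t \<omega>\<bar> \<le> \<epsilon>/3" if "\<omega> \<in> space M - E1" "s \<in> {0..T}" "t \<in> {0..T}"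
      "\<bar>s - t\<bar> \<le> mesh (\<theta> n)" for \<omega> s t
      using osc[OF that(1-3)] that(4) N[OF \<open>N \<le> n\<close>] by simp
    then obtain E where E: "E \<in> sets M" "prob E \<le> prob E1 + T * mesh (\<theta> n) powr (2*H - 1) / (\<epsilon>/3)^2"
      "{\<omega>\<in>space M. \<epsilon> < (SUP t\<in>{0..T}. \<bar>B t \<omega> - compensator M F B (\<theta> n) t \<omega>\<bar>)} \<subseteq> E"
      using fBm_compensator_deviation_event[OF assms(1,2,4,5,6,7) part \<open>0 < \<epsilon>\<close> \<open>E1 \<in> sets M\<close>]
      by blast
    moreover have "prob E < \<delta>" using E(2) \<open>prob E1 < \<delta>/2\<close> N[OF \<open>N \<le> n\<close>] by linarith
    ultimately show "\<exists>E\<in>sets M. prob E < \<delta> \<and>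
        {\<omega>\<in>space M. (SUP t\<in>{0..T}. \<bar>B t \<omega> - compensator M F B (\<theta> n) t \<omega>\<bar>) > \<epsilon>} \<subseteq> E"
      by blast
  qed
qed

end
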